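(* Let $1\le K<d$ be integers, $T_\lambda$ as below, $u_\lambda$ the minimal solution in $[1,\infty)$ of $T_\lambda(u)=u$ (which exists for $\lambda$ in a left neighbourhood of $1$), and $h_\lambda(x)=\frac{u_\lambda-T_\lambda(u_\lambda-x)}{x}$. There exist $\tilde\lambda<1$ and $b\in\mathbb N$ (independent of $\lambda$) such that for all $\lambda\in(\tilde\lambda,1)$ the function $h_\lambda$ is decreasing on $[u_\lambda-\lambda^b,u_\lambda]$.
   Context: $T_\lambda(u)=\frac{\lambda}{K}\sum_{j=0}^{K-1}(K-j)\binom{d}{j}u^{d-j}(1-u)^j$ for $u\in[0,\infty)$, $\lambda\in(0,1)$. *)

theory Defs
  imports Complex_Main
begin

definition T :: "nat \<Rightarrow> nat \<Rightarrow> real \<Rightarrow> real \<Rightarrow> real" where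
  "T K d lam u = lam / real K * (\<Sum>j<K. real (K - j) * real (d choose j) * u ^ (d - j) * (1 - u) ^ j)"

definition h :: "nat \<Rightarrow> nat \<Rightarrow> real \<Rightarrow> real \<Rightarrow> real \<Rightarrow> real" where
  "h K d lam ul x = (ul - T K d lam (ul - x)) / x"

end

theory Submission
  imports Defs "HOL-Analysis.Elementary_Metric_Spaces"
begin

text \<open>
  Write \<open>n = d - 1\<close>. The derivative of \<open>T\<^sub>\<lambda>\<close> is \<open>\<lambda> (d/K) S(u)\<close>, where \<open>S(u)\<close> is the
  probability that a binomial \<open>(n, 1 - u)\<close> variable is smaller than \<open>K\<close>, extended polynomially
  to all real \<open>u\<close>. Since \<open>S(1) = 1\<close> and \<open>d/K > 1\<close>, near \<open>u = 1\<close> the map \<open>T\<^sub>\<lambda>\<close> grows faster than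
  the identity while \<open>T\<^sub>\<lambda>(1) = \<lambda>\<close>; hence there is a fixed point, and the least fixed point
  \<open>u\<^sub>\<lambda> > 1\<close> satisfies \<open>u\<^sub>\<lambda> - 1 = O(1 - \<lambda>)\<close>.

  Writing \<open>s = u\<^sub>\<lambda> - x\<close>, the function \<open>h\<^sub>\<lambda>\<close> is decreasing at \<open>x\<close> as soon as the chord of \<open>T\<^sub>\<lambda>\<close> from
  \<open>s\<close> to \<open>u\<^sub>\<lambda>\<close> is steeper than the tangent at \<open>s\<close>, which by the mean value theorem follows from
  \<open>S(s) < S(\<xi>)\<close> for \<open>s < \<xi> < u\<^sub>\<lambda>\<close>. On \<open>[0,1]\<close> the function \<open>S\<close> is strictly increasing. Beyond \<open>1\<close>
  it drops below \<open>1\<close> by at most \<open>O((u\<^sub>\<lambda> - 1)\<^sup>K) = O((1 - \<lambda>)\<^sup>K)\<close>, whereas for \<open>s \<le> \<lambda>\<^sup>b\<close> the gap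
  \<open>1 - S(s)\<close> is at least of order \<open>(1 - \<lambda>\<^sup>b)\<^sup>K \<ge> (b (1 - \<lambda>) / 2)\<^sup>K\<close>; a large \<open>b\<close> wins.
\<close>

definition binom_partial :: "nat \<Rightarrow> nat \<Rightarrow> real \<Rightarrow> real" where
  "binom_partial n k t = (\<Sum>j<k. real (n choose j) * t ^ (n - j) * (1 - t) ^ j)"

definition binom_tail :: "nat \<Rightarrow> nat \<Rightarrow> real \<Rightarrow> real" where
  "binom_tail n k t = (\<Sum>j\<in>{k..n}. real (n choose j) * t ^ (n - j) * (1 - t) ^ j)"

definition binom_weighted :: "nat \<Rightarrow> nat \<Rightarrow> real \<Rightarrow> real" where
  "binom_weighted n k t = (\<Sum>j<k. real (k - j) * real (n choose j) * t ^ (n - j) * (1 - t) ^ j)"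

lemma binom_partial_Suc:
  "binom_partial n (Suc k) t = binom_partial n k t + real (n choose k) * t ^ (n - k) * (1 - t) ^ k"
  by (simp add: binom_partial_def)

lemma binom_weighted_Suc:
  "binom_weighted n (Suc k) t = binom_weighted n k t + binom_partial n (Suc k) t"
proof -
  have "binom_weighted n (Suc k) t
      = (\<Sum>j<k. real (Suc k - j) * real (n choose j) * t ^ (n - j) * (1 - t) ^ j)
        + real (n choose k) * t ^ (n - k) * (1 - t) ^ k"
    by (simp add: binom_weighted_def)
  also have "(\<Sum>j<k. real (Suc k - j) * real (n choose j) * t ^ (n - j) * (1 - t) ^ j)
      = (\<Sum>j<k. real (k - j) * real (n choose j) * t ^ (n - j) * (1 - t) ^ j
              + real (n choose j) * t ^ (n - j) * (1 - t) ^ j)"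
    by (rule sum.cong) (auto simp: Suc_diff_le of_nat_Suc algebra_simps)
  finally show ?thesis
    by (simp add: sum.distrib binom_weighted_def binom_partial_def)
qed

lemma binom_partial_eq_1_minus_tail:
  assumes "k \<le> n"
  shows "binom_partial n k t = 1 - binom_tail n k t"
proof -
  have "(1::real) = ((1 - t) + t) ^ n" by simp
  also have "\<dots> = (\<Sum>j\<le>n. real (n choose j) * t ^ (n - j) * (1 - t) ^ j)"
    by (subst binomial_ring) (simp add: algebra_simps)
  also have "{..n} = {..<k} \<union> {k..n}" using assms by auto
  also have "(\<Sum>j\<in>{..<k} \<union> {k..n}. real (n choose j) * t ^ (n - j) * (1 - t) ^ j)
      = binom_partial n k t + binom_tail n k t"
    unfolding binom_partial_def binom_tail_def by (rule sum.union_disjoint) auto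
  finally show ?thesis by simp
qed

text \<open>The sum telescopes: only the derivative of the last binomial term survives.\<close>

lemma binom_partial_Suc_has_derivative:
  "(binom_partial (Suc p + m) (Suc p) has_real_derivative
      real (Suc p + m) * real ((p + m) choose p) * t ^ m * (1 - t) ^ p) (at t)"
proof (induction p arbitrary: m)
  case 0
  have "binom_partial (Suc m) (Suc 0) = (\<lambda>t. t ^ Suc m)"
    by (auto simp: binom_partial_def)
  then show ?case using DERIV_pow[of "Suc m" t] by simp
next
  case (Suc p)
  define n where "n = Suc (Suc p) + m"
  have IH: "(binom_partial n (Suc p) has_real_derivative
      real n * real ((p + Suc m) choose p) * t ^ Suc m * (1 - t) ^ p) (at t)"
    using Suc.IH[of "Suc m"] by (simp add: n_def)
  have split: "binom_partial n (Suc (Suc p))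
      = (\<lambda>t. binom_partial n (Suc p) t + real (n choose Suc p) * t ^ Suc m * (1 - t) ^ Suc p)"
    by (rule ext) (simp add: binom_partial_Suc n_def)
  have new_term: "((\<lambda>t. real (n choose Suc p) * t ^ Suc m * (1 - t) ^ Suc p) has_real_derivative
      real (Suc m) * real (n choose Suc p) * t ^ m * (1 - t) ^ Suc p
      - real (Suc p) * real (n choose Suc p) * t ^ Suc m * (1 - t) ^ p) (at t)"
  proof -
    have "((\<lambda>t. (1 - t) ^ Suc p) has_real_derivative - (real (Suc p) * (1 - t) ^ p)) (at t)"
    proof -
      have "((\<lambda>t. 1 - t) has_real_derivative - 1) (at t)"
        by (auto intro!: derivative_eq_intros)
      from DERIV_power_Suc[OF this, of p] show ?thesis by (simp add: algebra_simps)
    qed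
    from DERIV_cmult[OF DERIV_mult[OF DERIV_pow[of "Suc m" t] this], of "real (n choose Suc p)"]
    show ?thesis by (simp add: algebra_simps)
  qed
  have "Suc p * (n choose Suc p) = n * ((p + Suc m) choose p)"
    using binomial_absorption[of p n] by (simp add: n_def)
  moreover have "Suc m * (n choose Suc p) = n * ((Suc p + m) choose Suc p)"
    using binomial_absorb_comp[of n "Suc p"] by (simp add: n_def)
  ultimately have "real (Suc p) * real (n choose Suc p) = real n * real ((p + Suc m) choose p)"
    and "real (Suc m) * real (n choose Suc p) = real n * real ((Suc p + m) choose Suc p)"
    by (simp_all only: of_nat_mult[symmetric])
  then have "real n * real ((p + Suc m) choose p) * t ^ Suc m * (1 - t) ^ p
      + (real (Suc m) * real (n choose Suc p) * t ^ m * (1 - t) ^ Suc p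
         - real (Suc p) * real (n choose Suc p) * t ^ Suc m * (1 - t) ^ p)
      = real n * real ((Suc p + m) choose Suc p) * t ^ m * (1 - t) ^ Suc p"
    by (simp only:)
  then show ?case
    using DERIV_add[OF IH new_term] unfolding split n_def[symmetric] by simp
qed

lemma binom_partial_has_derivative:
  assumes "1 \<le> k" "k \<le> n"
  shows "(binom_partial n k has_real_derivative
           real n * real ((n - 1) choose (k - 1)) * t ^ (n - k) * (1 - t) ^ (k - 1)) (at t)"
proof -
  obtain p where "k = Suc p" using assms by (cases k) auto
  moreover obtain m where "n = k + m" using assms by (metis le_iff_add)
  ultimately show ?thesis using binom_partial_Suc_has_derivative[of p m t] by simp
qed

lemma binom_weighted_has_derivative:
  assumes "k \<le> n"
  shows "(binom_weighted n k has_real_derivative real n * binom_partial (n - 1) k t) (at t)"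
  using assms
proof (induction k)
  case 0
  have "binom_weighted n 0 = (\<lambda>t. 0)" by (auto simp: binom_weighted_def)
  then show ?case by (simp add: binom_partial_def)
next
  case (Suc k)
  have "binom_weighted n (Suc k) = (\<lambda>t. binom_weighted n k t + binom_partial n (Suc k) t)"
    by (rule ext) (rule binom_weighted_Suc)
  moreover have "n - 1 - k = n - Suc k" by simp
  ultimately show ?case
    using DERIV_add[OF Suc.IH binom_partial_has_derivative[of "Suc k" n]] Suc.prems
    by (simp add: binom_partial_Suc algebra_simps)
qed

lemma binom_tail_abs_le:
  assumes "1 \<le> t" "t \<le> 2" "k \<le> n"
  shows "\<bar>binom_tail n k t\<bar> \<le> real (n + 1) * 4 ^ n * (t - 1) ^ k"
proof -
  have term_le: "\<bar>real (n choose j) * t ^ (n - j) * (1 - t) ^ j\<bar> \<le> 4 ^ n * (t - 1) ^ k"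
    if j: "j \<in> {k..n}" for j
  proof -
    have "real (n choose j) \<le> 2 ^ n"
      using binomial_le_pow2[of n j] by (metis of_nat_le_iff of_nat_numeral of_nat_power)
    moreover have "t ^ (n - j) \<le> 2 ^ n"
      using assms power_mono[of t 2 "n - j"] power_increasing[of "n - j" n "2::real"]
      by (simp add: order_trans)
    moreover have "\<bar>1 - t\<bar> ^ j \<le> (t - 1) ^ k"
      using assms j by (simp add: power_decreasing)
    ultimately have "real (n choose j) * t ^ (n - j) * \<bar>1 - t\<bar> ^ j \<le> 2 ^ n * 2 ^ n * (t - 1) ^ k"
      using assms by (intro mult_mono) auto
    then show ?thesis
      using assms by (simp add: abs_mult power_abs flip: power_mult_distrib)
  qed
  have "\<bar>binom_tail n k t\<bar> \<le> (\<Sum>j\<in>{k..n}. 4 ^ n * (t - 1) ^ k)"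
    unfolding binom_tail_def by (rule order_trans[OF sum_abs sum_mono[OF term_le]])
  also have "\<dots> = real (card {k..n}) * (4 ^ n * (t - 1) ^ k)" by simp
  also have "\<dots> \<le> real (n + 1) * (4 ^ n * (t - 1) ^ k)"
    using assms by (intro mult_right_mono) auto
  finally show ?thesis by simp
qed

lemma binom_partial_ge_near_1:
  assumes "1 \<le> t" "t \<le> 2" "k \<le> n"
  shows "1 - real (n + 1) * 4 ^ n * (t - 1) ^ k \<le> binom_partial n k t"
  using binom_tail_abs_le[OF assms] binom_partial_eq_1_minus_tail[OF assms(3)] by simp

lemma binom_partial_ge_near_1_linear:
  assumes "1 \<le> t" "t \<le> 2" "1 \<le> k" "k \<le> n"
  shows "1 - real (n + 1) * 4 ^ n * (t - 1) \<le> binom_partial n k t"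
proof -
  have "(t - 1) ^ k \<le> (t - 1) ^ 1"
    using assms by (intro power_decreasing) auto
  then have "real (n + 1) * 4 ^ n * (t - 1) ^ k \<le> real (n + 1) * 4 ^ n * (t - 1)"
    by (intro mult_left_mono) auto
  then show ?thesis
    using binom_partial_ge_near_1[OF assms(1,2,4)] by linarith
qed

lemma binom_partial_le_below_1:
  assumes "0 \<le> t" "t \<le> 1" "k \<le> n"
  shows "binom_partial n k t \<le> 1 - real (n choose k) * t ^ (n - k) * (1 - t) ^ k"
proof -
  have "real (n choose k) * t ^ (n - k) * (1 - t) ^ k \<le> binom_tail n k t"
    unfolding binom_tail_def using assms by (intro member_le_sum) auto
  then show ?thesis using binom_partial_eq_1_minus_tail[OF assms(3)] by simp
qed

lemma binom_partial_strict_mono_on_unit: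
  assumes "1 \<le> k" "k \<le> n" "0 \<le> a" "a < b" "b \<le> 1"
  shows "binom_partial n k a < binom_partial n k b"
proof (rule DERIV_pos_imp_increasing_open[OF assms(4)])
  fix x assume x: "a < x" "x < b"
  have "0 < real ((n - 1) choose (k - 1))" using assms by simp
  then have "0 < real n * real ((n - 1) choose (k - 1)) * x ^ (n - k) * (1 - x) ^ (k - 1)"
    using assms x by (intro mult_pos_pos) auto
  with binom_partial_has_derivative[OF assms(1,2)]
  show "\<exists>y. (binom_partial n k has_real_derivative y) (at x) \<and> 0 < y" by blast
qed (auto simp: binom_partial_def intro!: continuous_intros)

lemma binom_partial_mono_on_unit:
  assumes "1 \<le> k" "k \<le> n" "0 \<le> a" "a \<le> b" "b \<le> 1"
  shows "binom_partial n k a \<le> binom_partial n k b"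
  using binom_partial_strict_mono_on_unit[of k n a b] assms by (cases "a = b") auto

lemma one_minus_power_ge:
  fixes x :: real
  assumes "0 \<le> x" "x \<le> 1"
  shows "real b * (1 - x) * x ^ b \<le> 1 - x ^ b"
proof -
  have "(\<Sum>i<b. x ^ b) \<le> (\<Sum>i<b. x ^ i)"
    using assms by (intro sum_mono power_decreasing) auto
  then have "(1 - x) * (real b * x ^ b) \<le> (1 - x) * (\<Sum>i<b. x ^ i)"
    using assms by (intro mult_left_mono) auto
  then show ?thesis by (simp add: one_diff_power_eq mult_ac)
qed

lemma power_near_1_bounds:
  fixes x :: real
  assumes "1 - 1 / (2 * real b) \<le> x" "x \<le> 1" "1 \<le> b"
  shows "1 / 2 \<le> x ^ b" "real b * (1 - x) / 2 \<le> 1 - x ^ b"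
proof -
  have "1 / 2 \<le> 1 - 1 / (2 * real b)" using assms by (simp add: field_simps)
  then have "0 \<le> x" using assms by linarith
  have "1 / 2 \<le> 1 + real b * (x - 1)" using assms by (simp add: field_simps)
  also have "\<dots> \<le> x ^ b"
    using Bernoulli_inequality[of "x - 1" b] \<open>0 \<le> x\<close> by simp
  finally show "1 / 2 \<le> x ^ b" .
  then have "real b * (1 - x) * (1 / 2) \<le> real b * (1 - x) * x ^ b"
    using assms by (intro mult_left_mono) auto
  then show "real b * (1 - x) / 2 \<le> 1 - x ^ b"
    using one_minus_power_ge[of x b] \<open>0 \<le> x\<close> assms by linarith
qed

lemma binom_partial_less_beyond_1:
  assumes "1 \<le> k" "k \<le> n" "0 \<le> s" "s \<le> s\<^sub>0" "s\<^sub>0 < 1" "s < \<xi>" "\<xi> \<le> u" "u \<le> 2"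
    and gap: "real (n + 1) * 4 ^ n * (u - 1) ^ k < real (n choose k) * s\<^sub>0 ^ (n - k) * (1 - s\<^sub>0) ^ k"
  shows "binom_partial n k s < binom_partial n k \<xi>"
proof (cases "\<xi> \<le> 1")
  case True
  then show ?thesis using binom_partial_strict_mono_on_unit assms by simp
next
  case False
  have "binom_partial n k s \<le> binom_partial n k s\<^sub>0"
    using binom_partial_mono_on_unit assms by simp
  also have "\<dots> \<le> 1 - real (n choose k) * s\<^sub>0 ^ (n - k) * (1 - s\<^sub>0) ^ k"
    using binom_partial_le_below_1 assms by simp
  also have "\<dots> < 1 - real (n + 1) * 4 ^ n * (u - 1) ^ k"
    using gap by simp
  also have "\<dots> \<le> 1 - real (n + 1) * 4 ^ n * (\<xi> - 1) ^ k"
    using False assms by (intro diff_left_mono mult_left_mono power_mono) auto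
  also have "\<dots> \<le> binom_partial n k \<xi>"
    using binom_partial_ge_near_1 False assms by simp
  finally show ?thesis .
qed

lemma binom_term_dominates:
  fixes M c r \<beta> e s :: real
  assumes "1 \<le> k" "k \<le> n" "1 \<le> M" "0 \<le> e" "e \<le> c * r" "0 < r" "M * 2 ^ n * c < \<beta>"
    "1 / 2 \<le> s" "\<beta> * r / 2 \<le> 1 - s"
  shows "M * e ^ k < real (n choose k) * s ^ (n - k) * (1 - s) ^ k"
proof -
  have "0 \<le> c * r" using assms by linarith
  then have "0 \<le> c" using \<open>0 < r\<close> by (simp add: zero_le_mult_iff)
  then have "0 \<le> M * 2 ^ n * c" using assms by simp
  then have "0 < \<beta>" using assms by linarith
  have "1 \<le> M * 2 ^ n" using mult_mono[of 1 M 1 "2 ^ n"] assms by simp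
  then have "M * 2 ^ n * c ^ k \<le> (M * 2 ^ n) ^ k * c ^ k"
    using power_increasing[of 1 k "M * 2 ^ n"] assms \<open>0 \<le> c\<close> by (simp add: mult_right_mono)
  also have "\<dots> < \<beta> ^ k"
    using assms \<open>0 \<le> c\<close> by (simp add: power_strict_mono flip: power_mult_distrib)
  finally have "M * c ^ k * r ^ k < \<beta> ^ k * r ^ k / 2 ^ n"
    using \<open>0 < r\<close> by (simp add: field_simps)
  moreover have "M * e ^ k \<le> M * c ^ k * r ^ k"
    using assms by (simp add: power_mono mult.assoc flip: power_mult_distrib)
  moreover have "\<beta> ^ k * r ^ k / 2 ^ n \<le> 1 * (1 / 2) ^ (n - k) * (\<beta> * r / 2) ^ k"
    using assms by (simp add: power_mult_distrib power_divide field_simps flip: power_add)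
  moreover have "\<dots> \<le> real (n choose k) * s ^ (n - k) * (1 - s) ^ k"
    using assms \<open>0 < \<beta>\<close> by (intro mult_mono power_mono) (auto simp: Suc_leI)
  ultimately show ?thesis by linarith
qed

lemma T_eq_binom_weighted: "T K d lam = (\<lambda>t. lam / real K * binom_weighted d K t)"
  by (simp add: T_def binom_weighted_def fun_eq_iff)

lemma continuous_on_T: "continuous_on A (T K d lam)"
  unfolding T_def by (intro continuous_intros)

lemma T_at_1:
  assumes "1 \<le> K"
  shows "T K d lam 1 = lam"
proof -
  have "binom_weighted d K 1 = (\<Sum>j<K. if j = 0 then real K else 0)"
    unfolding binom_weighted_def by (rule sum.cong) auto
  then show ?thesis using assms by (simp add: T_eq_binom_weighted)
qed

lemma T_has_derivative:
  assumes "K \<le> d"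
  shows "(T K d lam has_real_derivative lam * (real d / real K) * binom_partial (d - 1) K t) (at t)"
  using DERIV_cmult[OF binom_weighted_has_derivative[OF assms], of "lam / real K"]
  by (simp add: T_eq_binom_weighted mult.assoc)

lemma least_fixed_point_above:
  fixes f :: "real \<Rightarrow> real"
  assumes "continuous_on UNIV f" "a \<le> w" "f w = w"
  shows "\<exists>u. a \<le> u \<and> u \<le> w \<and> f u = u \<and> (\<forall>v. a \<le> v \<and> f v = v \<longrightarrow> u \<le> v)"
proof -
  define Z where "Z = {v. a \<le> v} \<inter> {v. f v = id v}"
  have "closed Z"
    unfolding Z_def using assms(1)
    by (intro closed_Int closed_Collect_eq) (auto simp: closed_Collect_le)
  moreover have "bdd_below Z" "w \<in> Z"
    using assms by (auto simp: Z_def bdd_below_def)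
  ultimately have "Inf Z \<in> Z" "\<forall>v\<in>Z. Inf Z \<le> v"
    using closed_contains_Inf cInf_lower by blast+
  then show ?thesis using \<open>w \<in> Z\<close> by (auto simp: Z_def)
qed

lemma secant_slope_strict_decreasing:
  fixes f f' :: "real \<Rightarrow> real"
  assumes deriv: "\<And>t. (f has_real_derivative f' t) (at t)"
    and fixed: "f u = u"
    and "0 < x" "x < y"
    and steeper: "\<And>s \<xi>. u - y \<le> s \<Longrightarrow> s \<le> u - x \<Longrightarrow> s < \<xi> \<Longrightarrow> \<xi> < u \<Longrightarrow> f' s < f' \<xi>"
  shows "(u - f (u - y)) / y < (u - f (u - x)) / x"
proof (rule DERIV_neg_imp_decreasing[OF \<open>x < y\<close>])
  fix z assume z: "x \<le> z" "z \<le> y"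
  with \<open>0 < x\<close> have "0 < z" by simp
  obtain \<xi> where \<xi>: "u - z < \<xi>" "\<xi> < u" "f u - f (u - z) = (u - (u - z)) * f' \<xi>"
    using MVT2[of "u - z" u f f'] deriv \<open>0 < z\<close> by auto
  have chord: "f' (u - z) * z < u - f (u - z)"
    using steeper[OF _ _ \<xi>(1,2)] z \<xi>(3) fixed \<open>0 < z\<close> by (simp add: mult.commute)
  have inner: "((\<lambda>z. u - f (u - z)) has_real_derivative f' (u - z)) (at z)"
    using DERIV_chain2[OF deriv DERIV_diff[OF DERIV_const[of u] DERIV_ident]]
    by (auto intro!: derivative_eq_intros)
  from DERIV_quotient[OF inner DERIV_ident] \<open>0 < z\<close>
  have "((\<lambda>z. (u - f (u - z)) / z) has_real_derivative
      (f' (u - z) * z - (u - f (u - z))) / z\<^sup>2) (at z)"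
    by (simp add: power2_eq_square)
  with chord \<open>0 < z\<close>
  show "\<exists>D. ((\<lambda>z. (u - f (u - z)) / z) has_real_derivative D) (at z) \<and> D < 0"
    by (intro exI conjI) (auto simp: divide_neg_pos)
qed

lemma T_ge_linear_near_1:
  assumes "1 \<le> K" "K < d" "0 \<le> lam" "0 \<le> \<epsilon>" "\<epsilon> \<le> 1"
    and slope: "\<rho> \<le> real d / real K * (1 - real d * 4 ^ (d - 1) * \<epsilon>)"
  shows "lam * (1 + \<rho> * \<epsilon>) \<le> T K d lam (1 + \<epsilon>)"
proof -
  have "lam * \<rho> \<le> lam * (real d / real K) * binom_partial (d - 1) K t"
    if t: "1 \<le> t" "t \<le> 1 + \<epsilon>" for t
  proof -
    have "1 - real d * 4 ^ (d - 1) * \<epsilon> \<le> 1 - real d * 4 ^ (d - 1) * (t - 1)"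
      using t by (intro diff_left_mono mult_left_mono) auto
    also have "\<dots> \<le> binom_partial (d - 1) K t"
      using binom_partial_ge_near_1_linear[of t K "d - 1"] t assms by simp
    finally have "real d / real K * (1 - real d * 4 ^ (d - 1) * \<epsilon>)
        \<le> real d / real K * binom_partial (d - 1) K t"
      by (intro mult_left_mono) auto
    with slope have "\<rho> \<le> real d / real K * binom_partial (d - 1) K t" by linarith
    then show ?thesis using \<open>0 \<le> lam\<close> by (metis mult.assoc mult_left_mono)
  qed
  then have "T K d lam 1 - lam * \<rho> * 1 \<le> T K d lam (1 + \<epsilon>) - lam * \<rho> * (1 + \<epsilon>)"
    using assms T_has_derivative[of K d lam]
    by (intro DERIV_nonneg_imp_nondecreasing[where f = "\<lambda>t. T K d lam t - lam * \<rho> * t"])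
      (auto intro!: exI derivative_eq_intros)
  then show ?thesis using T_at_1 assms by (simp add: algebra_simps)
qed

lemma T_has_fixed_point_near_1:
  assumes "1 \<le> K" "K < d"
  obtains c lam0 :: real where "0 < c" "lam0 < 1"
    "\<And>lam. lam0 < lam \<Longrightarrow> lam < 1 \<Longrightarrow> \<exists>w. 1 \<le> w \<and> w \<le> 1 + c * (1 - lam) \<and> T K d lam w = w"
proof -
  define q where "q = real d / real K"
  define M where "M = real d * 4 ^ (d - 1)"
  define \<rho> where "\<rho> = (1 + q) / 2"
  define c where "c = 2 / (\<rho> - 1)"
  define lam0 where "lam0 = max ((1 + \<rho>) / (2 * \<rho>)) (1 - min 1 ((q - 1) / (2 * q * M)) / c)"
  have "1 < q" "1 \<le> M" "1 < \<rho>" "0 < c"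
    using assms by (auto simp: q_def M_def \<rho>_def c_def one_le_power order_trans[of 1 "real d"])
  show thesis
  proof (rule that)
    show "0 < c" by fact
    show "lam0 < 1" using \<open>1 < q\<close> \<open>1 < \<rho>\<close> \<open>0 < c\<close> \<open>1 \<le> M\<close> by (auto simp: lam0_def field_simps)
    fix lam assume lam: "lam0 < lam" "lam < 1"
    define \<epsilon> where "\<epsilon> = c * (1 - lam)"
    have "0 < (1 + \<rho>) / (2 * \<rho>)" using \<open>1 < \<rho>\<close> by simp
    then have "0 < lam" using lam by (simp add: lam0_def)
    have "0 < \<epsilon>" "\<epsilon> \<le> 1" "\<epsilon> \<le> (q - 1) / (2 * q * M)"
      using lam \<open>0 < c\<close> \<open>1 < \<rho>\<close> by (auto simp: \<epsilon>_def lam0_def field_simps)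
    then have "\<rho> \<le> q * (1 - M * \<epsilon>)"
      using \<open>1 < q\<close> \<open>1 \<le> M\<close> by (simp add: \<rho>_def field_simps)
    then have "lam * (1 + \<rho> * \<epsilon>) \<le> T K d lam (1 + \<epsilon>)"
      using T_ge_linear_near_1 assms \<open>0 < lam\<close> \<open>0 < \<epsilon>\<close> \<open>\<epsilon> \<le> 1\<close> by (simp add: q_def M_def)
    moreover have "1 + \<epsilon> \<le> lam * (1 + \<rho> * \<epsilon>)"
    proof -
      have "(\<rho> - 1) / 2 \<le> lam * \<rho> - 1" using lam \<open>1 < \<rho>\<close> by (simp add: lam0_def field_simps)
      then have "\<epsilon> * ((\<rho> - 1) / 2) \<le> \<epsilon> * (lam * \<rho> - 1)"
        using \<open>0 < \<epsilon>\<close> by (intro mult_left_mono) auto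
      moreover have "\<epsilon> * ((\<rho> - 1) / 2) = 1 - lam" using \<open>1 < \<rho>\<close> by (simp add: \<epsilon>_def c_def)
      ultimately show ?thesis by (simp add: algebra_simps)
    qed
    ultimately have "\<exists>w. 1 \<le> w \<and> w \<le> 1 + \<epsilon> \<and> T K d lam w - w = 0"
      using T_at_1[OF assms(1)] lam \<open>0 < \<epsilon>\<close>
      by (intro IVT') (auto intro!: continuous_intros continuous_on_T)
    then show "\<exists>w. 1 \<le> w \<and> w \<le> 1 + c * (1 - lam) \<and> T K d lam w = w"
      by (auto simp: \<epsilon>_def)
  qed
qed

lemma h_strict_decreasing_near_fixed_point:
  assumes "1 \<le> K" "K < d" "0 < c"
  obtains lam1 :: real and b :: nat where "lam1 < 1"
    "\<And>lam u x y. lam1 < lam \<Longrightarrow> lam < 1 \<Longrightarrow> 1 < u \<Longrightarrow> u \<le> 1 + c * (1 - lam) \<Longrightarrow>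
       T K d lam u = u \<Longrightarrow> u - lam ^ b \<le> x \<Longrightarrow> x < y \<Longrightarrow> y \<le> u \<Longrightarrow>
       h K d lam u y < h K d lam u x"
proof -
  define n where "n = d - 1"
  define M where "M = real (n + 1) * 4 ^ n"
  define b where "b = nat \<lceil>M * 2 ^ n * c\<rceil> + 1"
  define lam1 where "lam1 = max (1 - 1 / c) (1 - 1 / (2 * real b))"
  have "K \<le> n" "1 \<le> M" "M * 2 ^ n * c < real b" "1 \<le> b"
    using assms by (auto simp: n_def M_def b_def one_le_power order_trans[of 1 "real (Suc n)"]) linarith
  show thesis
  proof (rule that)
    show "lam1 < 1" using \<open>0 < c\<close> \<open>1 \<le> b\<close> by (simp add: lam1_def)
    fix lam u x y
    assume lam: "lam1 < lam" "lam < 1"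
      and u: "1 < u" "u \<le> 1 + c * (1 - lam)" "T K d lam u = u"
      and xy: "u - lam ^ b \<le> x" "x < y" "y \<le> u"
    define s\<^sub>0 where "s\<^sub>0 = lam ^ b"
    have "1 / 2 \<le> 1 - 1 / (2 * real b)" using \<open>1 \<le> b\<close> by (simp add: field_simps)
    then have "0 < lam" using lam by (simp add: lam1_def)
    have "c * (1 - lam) < 1" using lam \<open>0 < c\<close> by (simp add: lam1_def field_simps)
    then have "u \<le> 2" using u by simp
    have "1 / 2 \<le> s\<^sub>0" "real b * (1 - lam) / 2 \<le> 1 - s\<^sub>0"
      using power_near_1_bounds[of b lam] lam \<open>1 \<le> b\<close> by (simp_all add: lam1_def s\<^sub>0_def)
    then have gap: "M * (u - 1) ^ K < real (n choose K) * s\<^sub>0 ^ (n - K) * (1 - s\<^sub>0) ^ K"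
      using u lam assms \<open>K \<le> n\<close> \<open>1 \<le> M\<close> \<open>M * 2 ^ n * c < real b\<close>
      by (intro binom_term_dominates[where c = c and r = "1 - lam" and \<beta> = "real b"]) auto
    have "s\<^sub>0 < 1" using lam \<open>0 < lam\<close> \<open>1 \<le> b\<close> by (simp add: s\<^sub>0_def power_less_one_iff)
    have "(u - T K d lam (u - y)) / y < (u - T K d lam (u - x)) / x"
    proof (rule secant_slope_strict_decreasing[OF T_has_derivative u(3)])
      fix s \<xi> assume "u - y \<le> s" "s \<le> u - x" "s < \<xi>" "\<xi> < u"
      then have "binom_partial n K s < binom_partial n K \<xi>"
        using binom_partial_less_beyond_1[of K n s s\<^sub>0 \<xi> u] gap xy assms \<open>K \<le> n\<close> \<open>s\<^sub>0 < 1\<close> \<open>u \<le> 2\<close>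
        by (simp add: M_def s\<^sub>0_def)
      then show "lam * (real d / real K) * binom_partial (d - 1) K s
          < lam * (real d / real K) * binom_partial (d - 1) K \<xi>"
        using assms \<open>0 < lam\<close> by (intro mult_strict_left_mono) (auto simp: n_def)
    qed (use assms xy \<open>s\<^sub>0 < 1\<close> u in \<open>auto simp: s\<^sub>0_def\<close>)
    then show "h K d lam u y < h K d lam u x" by (simp add: h_def)
  qed
qed

theorem lemma3p6:
  fixes K d :: nat
  assumes "1 \<le> K" and "K < d"
  shows "\<exists>lt::real. 0 < lt \<and> lt < 1 \<and> (\<exists>b::nat. \<forall>lam::real. lt < lam \<and> lam < 1 \<longrightarrow>
           (\<exists>u. 1 \<le> u \<and> T K d lam u = u \<and> (\<forall>v. 1 \<le> v \<and> T K d lam v = v \<longrightarrow> u \<le> v) \<and>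
                (\<forall>x y. u - lam ^ b \<le> x \<and> x < y \<and> y \<le> u \<longrightarrow> h K d lam u y < h K d lam u x)))"
proof -
  obtain c lam0 where "0 < c" "lam0 < 1" and fixed_point:
    "\<And>lam. lam0 < lam \<Longrightarrow> lam < 1 \<Longrightarrow> \<exists>w. 1 \<le> w \<and> w \<le> 1 + c * (1 - lam) \<and> T K d lam w = w"
    using T_has_fixed_point_near_1[OF assms] by metis
  obtain lam1 b where "lam1 < 1" and decreasing:
    "\<And>lam u x y. lam1 < lam \<Longrightarrow> lam < 1 \<Longrightarrow> 1 < u \<Longrightarrow> u \<le> 1 + c * (1 - lam) \<Longrightarrow>
       T K d lam u = u \<Longrightarrow> u - lam ^ b \<le> x \<Longrightarrow> x < y \<Longrightarrow> y \<le> u \<Longrightarrow>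
       h K d lam u y < h K d lam u x"
    using h_strict_decreasing_near_fixed_point[OF assms \<open>0 < c\<close>] by metis
  define lt where "lt = max (1 / 2) (max lam0 lam1)"
  have "\<exists>u. 1 \<le> u \<and> T K d lam u = u \<and> (\<forall>v. 1 \<le> v \<and> T K d lam v = v \<longrightarrow> u \<le> v) \<and>
            (\<forall>x y. u - lam ^ b \<le> x \<and> x < y \<and> y \<le> u \<longrightarrow> h K d lam u y < h K d lam u x)"
    if lam: "lt < lam" "lam < 1" for lam
  proof -
    obtain w where w: "1 \<le> w" "w \<le> 1 + c * (1 - lam)" "T K d lam w = w"
      using fixed_point lam by (auto simp: lt_def)
    then obtain u where u: "1 \<le> u" "u \<le> w" "T K d lam u = u"
      "\<forall>v. 1 \<le> v \<and> T K d lam v = v \<longrightarrow> u \<le> v"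
      using least_fixed_point_above[OF continuous_on_T] by blast
    moreover have "u \<noteq> 1" using u T_at_1[OF assms(1)] lam by auto
    ultimately show ?thesis
      using w lam decreasing[of lam u] by (intro exI[of _ u]) (auto simp: lt_def)
  qed
  moreover have "0 < lt" "lt < 1" using \<open>lam0 < 1\<close> \<open>lam1 < 1\<close> by (auto simp: lt_def)
  ultimately show ?thesis by blast
qed

end
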